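(* Let $\mathcal{F}$ be a construction scheme over $\omega_1$ of a good type, let $\mathcal{A}_\mathcal{F}=\langle A_\alpha\rangle_{\alpha<\omega_1}$ be the AD family over $N$ defined below, and let $(X,\leq)$ be an $\omega_1$-like partial order. Then there are a bijection $\psi:X\to\omega_1$ and infinite sets $T_x\subseteq N$ ($x\in X$) such that $(\langle T_x\rangle_{x\in X},\langle A_{\psi(x)}\rangle_{x\in X})$ is an almost disjoint representation of $X$. In particular $\mathcal{A}_\mathcal{F}$ codes every $\omega_1$-like partial order.
   Context: A type is a sequence $\langle m_k,n_{k+1},r_{k+1}\rangle_{k\in\omega}$ of natural numbers with $m_0=1$ and, for all $k$, $n_{k+1}\geq2$, $m_k>r_{k+1}$, $m_{k+1}=r_{k+1}+(m_k-r_{k+1})n_{k+1}$; good if each $r\in\omega$ equals $r_k$ for infinitely many $k\geq1$. A construction scheme of type $\tau$ over a set of ordinals $Y$ is a family $\mathcal{F}$ of nonempty finite subsets of $Y$, cofinal among finite subsets of $Y$ under $\subseteq$, each of size $m_k$ for some $k$, such that with $\mathcal{F}_k=\{F\in\mathcal{F}:|F|=m_k\}$: (i) for $E,F\in\mathcal{F}_k$, $E\cap F$ is an initial segment of both; (ii) every $F\in\mathcal{F}_{k+1}$ equals $F_0\cup\dots\cup F_{n_{k+1}-1}$ with $F_i\in\mathcal{F}_k$ a $\Delta$-system with root $R(F)$, $|R(F)|=r_{k+1}$, $R(F)<F_0\setminus R(F)<\dots<F_{n_{k+1}-1}\setminus R(F)$ ($A<B$: every element of $A$ below every element of $B$). $\rho(\alpha,\beta)=\min\{k:\exists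 F\in\mathcal{F}_k\ \{\alpha,\beta\}\subseteq F\}$; $\lVert\alpha\rVert_k=|\{\xi<\alpha:\rho(\xi,\alpha)\leq k\}|$; for $k\geq1$, $\Xi_\alpha(k)=-1$ if $\alpha\in R(F)$ and $=i$ if $\alpha\in F_i\setminus R(F)$ for any $F\in\mathcal{F}_k$ containing $\alpha$. The family $\mathcal{A}_\mathcal{F}$: for $k\geq1$, $N_k=\{(\sigma,k):\sigma:n_k\to m_{k-1}\}$, $N=\bigcup_{k\geq1}N_k$, $A^k_\alpha=\{(\sigma,k)\in N_k:\Xi_\alpha(k)\geq0,\ \sigma(\Xi_\alpha(k))=\lVert\alpha\rVert_{k-1}\}$, $A_\alpha=\bigcup_{k\geq1}A^k_\alpha$. $A\subseteq^*B$ means $A\setminus B$ finite; $A=^*B$ means both inclusions mod finite. A partial order is $\omega_1$-like if well-founded, of size $\omega_1$, with every $(-\infty,x)$ countable. $\inf(x,y)$ is the greatest lower bound when it exists; $x,y$ incompatible means no $z\leq x,y$; $\mathrm{pred}(x)$ is the set of maximal elements of $(-\infty,x)$ and $x$ is successor-like if $\mathrm{pred}(x)$ is finite and every $y<x$ is $\leq$ some $z\in\mathrm{pred}(x)$. An almost disjoint representation of $X$ is a pair of indexed families $\langle T_x\rangle_{x\in X},\langle A_x\rangle_{x\in X}$ of infinite subsets of a countable set, $x\mapsto A_x$ injective and $\{A_x\}$ almost disjoint, such that: (a) $A_x\subseteq T_x$; (b) $y\not\leq x\Rightarrow A_y\subseteq^*T_y\setminus T_x$; (c) if $\inf(x,y)$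 exists, $T_x\cap T_y=^*T_{\inf(x,y)}$; (d) $x$ successor-like $\Rightarrow T_x\setminus\bigcup_{z\in\mathrm{pred}(x)}T_z=^*A_x$; (e) $x,y$ incompatible $\Rightarrow T_x\cap T_y=^*\emptyset$. *)

theory Defs
  imports Main "HOL-Library.FuncSet" "HOL-Library.Countable_Set"
begin

text \<open>A type is given by three sequences m, n, r; the values n 0 and r 0 are unused.\<close>
definition is_type :: "(nat \<Rightarrow> nat) \<Rightarrow> (nat \<Rightarrow> nat) \<Rightarrow> (nat \<Rightarrow> nat) \<Rightarrow> bool" where
  "is_type m n r \<longleftrightarrow> m 0 = 1 \<and>
     (\<forall>k. n (Suc k) \<ge> 2 \<and> m k > r (Suc k) \<and>
          m (Suc k) = r (Suc k) + (m k - r (Suc k)) * n (Suc k))"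

definition good_type :: "(nat \<Rightarrow> nat) \<Rightarrow> (nat \<Rightarrow> nat) \<Rightarrow> (nat \<Rightarrow> nat) \<Rightarrow> bool" where
  "good_type m n r \<longleftrightarrow> is_type m n r \<and> (\<forall>j. infinite {k. k \<ge> 1 \<and> r k = j})"

definition set_less :: "'a::ord set \<Rightarrow> 'a set \<Rightarrow> bool" where
  "set_less A B \<longleftrightarrow> (\<forall>a\<in>A. \<forall>b\<in>B. a < b)"

definition initial_seg :: "'a::ord set \<Rightarrow> 'a set \<Rightarrow> bool" where
  "initial_seg S E \<longleftrightarrow> S \<subseteq> E \<and> (\<forall>x\<in>S. \<forall>y\<in>E. y < x \<longrightarrow> y \<in> S)"

definition level :: "'a set set \<Rightarrow> (nat \<Rightarrow> nat) \<Rightarrow> nat \<Rightarrow> 'a set set" where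
  "level FF m k = {F \<in> FF. card F = m k}"

definition is_decomp :: "'a::linorder set set \<Rightarrow> (nat \<Rightarrow> nat) \<Rightarrow> (nat \<Rightarrow> nat) \<Rightarrow> (nat \<Rightarrow> nat)
    \<Rightarrow> nat \<Rightarrow> 'a set \<Rightarrow> (nat \<Rightarrow> 'a set) \<Rightarrow> 'a set \<Rightarrow> bool" where
  "is_decomp FF m n r k F Fs R \<longleftrightarrow>
     (\<forall>i<n (Suc k). Fs i \<in> level FF m k) \<and>
     F = (\<Union>i<n (Suc k). Fs i) \<and>
     (\<forall>i<n (Suc k). \<forall>j<n (Suc k). i \<noteq> j \<longrightarrow> Fs i \<inter> Fs j = R) \<and>
     card R = r (Suc k) \<and>
     set_less R (Fs 0 - R) \<and>
     (\<forall>i. Suc i < n (Suc k) \<longrightarrow> set_less (Fs i - R) (Fs (Suc i) - R))"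

definition construction_scheme :: "'a::linorder set set \<Rightarrow> (nat \<Rightarrow> nat) \<Rightarrow> (nat \<Rightarrow> nat) \<Rightarrow> (nat \<Rightarrow> nat) \<Rightarrow> bool" where
  "construction_scheme FF m n r \<longleftrightarrow> is_type m n r \<and>
     (\<forall>F\<in>FF. finite F \<and> F \<noteq> {} \<and> (\<exists>k. card F = m k)) \<and>
     (\<forall>A. finite A \<longrightarrow> (\<exists>F\<in>FF. A \<subseteq> F)) \<and>
     (\<forall>k. \<forall>E\<in>level FF m k. \<forall>F\<in>level FF m k. initial_seg (E \<inter> F) E \<and> initial_seg (E \<inter> F) F) \<and>
     (\<forall>k. \<forall>F\<in>level FF m (Suc k). \<exists>Fs R. is_decomp FF m n r k F Fs R)"

definition rho :: "'a set set \<Rightarrow> (nat \<Rightarrow> nat) \<Rightarrow> 'a \<Rightarrow> 'a \<Rightarrow> nat" where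
  "rho FF m \<alpha> \<beta> = (LEAST k. \<exists>F\<in>level FF m k. \<alpha> \<in> F \<and> \<beta> \<in> F)"

definition normk :: "'a::ord set set \<Rightarrow> (nat \<Rightarrow> nat) \<Rightarrow> nat \<Rightarrow> 'a \<Rightarrow> nat" where
  "normk FF m k \<alpha> = card {\<xi>. \<xi> < \<alpha> \<and> rho FF m \<xi> \<alpha> \<le> k}"

text \<open>Xi alpha k, for k >= 1 (value -1 if alpha is in the root).  Well-definedness
  (independence of the choice of F) is a property of construction schemes.\<close>
definition Xi :: "'a::linorder set set \<Rightarrow> (nat \<Rightarrow> nat) \<Rightarrow> (nat \<Rightarrow> nat) \<Rightarrow> (nat \<Rightarrow> nat) \<Rightarrow> 'a \<Rightarrow> nat \<Rightarrow> int" where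
  "Xi FF m n r \<alpha> k = (SOME i. \<exists>F Fs R. F \<in> level FF m k \<and> \<alpha> \<in> F \<and>
       is_decomp FF m n r (k - 1) F Fs R \<and>
       ((\<alpha> \<in> R \<and> i = -1) \<or> (\<exists>j<n k. \<alpha> \<in> Fs j - R \<and> i = int j)))"

definition NN :: "(nat \<Rightarrow> nat) \<Rightarrow> (nat \<Rightarrow> nat) \<Rightarrow> nat \<Rightarrow> ((nat \<Rightarrow> nat) \<times> nat) set" where
  "NN m n k = {(\<sigma>, k) | \<sigma>. \<sigma> \<in> {..<n k} \<rightarrow>\<^sub>E {..<m (k - 1)}}"

definition NN_all :: "(nat \<Rightarrow> nat) \<Rightarrow> (nat \<Rightarrow> nat) \<Rightarrow> ((nat \<Rightarrow> nat) \<times> nat) set" where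
  "NN_all m n = (\<Union>k\<in>{1..}. NN m n k)"

definition AFk :: "'a::linorder set set \<Rightarrow> (nat \<Rightarrow> nat) \<Rightarrow> (nat \<Rightarrow> nat) \<Rightarrow> (nat \<Rightarrow> nat) \<Rightarrow> nat \<Rightarrow> 'a
    \<Rightarrow> ((nat \<Rightarrow> nat) \<times> nat) set" where
  "AFk FF m n r k \<alpha> = {p \<in> NN m n k. Xi FF m n r \<alpha> k \<ge> 0 \<and>
       fst p (nat (Xi FF m n r \<alpha> k)) = normk FF m (k - 1) \<alpha>}"

definition AF :: "'a::linorder set set \<Rightarrow> (nat \<Rightarrow> nat) \<Rightarrow> (nat \<Rightarrow> nat) \<Rightarrow> (nat \<Rightarrow> nat) \<Rightarrow> 'a
    \<Rightarrow> ((nat \<Rightarrow> nat) \<times> nat) set" where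
  "AF FF m n r \<alpha> = (\<Union>k\<in>{1..}. AFk FF m n r k \<alpha>)"

definition almost_eq :: "'c set \<Rightarrow> 'c set \<Rightarrow> bool" where
  "almost_eq A B \<longleftrightarrow> finite (A - B) \<and> finite (B - A)"

definition is_inf :: "'b::order \<Rightarrow> 'b \<Rightarrow> 'b \<Rightarrow> bool" where
  "is_inf x y z \<longleftrightarrow> z \<le> x \<and> z \<le> y \<and> (\<forall>w. w \<le> x \<and> w \<le> y \<longrightarrow> w \<le> z)"

definition incompatible :: "'b::order \<Rightarrow> 'b \<Rightarrow> bool" where
  "incompatible x y \<longleftrightarrow> \<not> (\<exists>z. z \<le> x \<and> z \<le> y)"

definition pred_set :: "'b::order \<Rightarrow> 'b set" where
  "pred_set x = {y. y < x \<and> \<not> (\<exists>w. w < x \<and> y < w)}"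

definition successor_like :: "'b::order \<Rightarrow> bool" where
  "successor_like x \<longleftrightarrow> finite (pred_set x) \<and> (\<forall>y. y < x \<longrightarrow> (\<exists>z\<in>pred_set x. y \<le> z))"

definition ad_representation :: "'c set \<Rightarrow> ('b::order \<Rightarrow> 'c set) \<Rightarrow> ('b \<Rightarrow> 'c set) \<Rightarrow> bool" where
  "ad_representation G T A \<longleftrightarrow>
     countable G \<and>
     (\<forall>x. T x \<subseteq> G \<and> infinite (T x) \<and> A x \<subseteq> G \<and> infinite (A x)) \<and>
     inj A \<and> (\<forall>x y. x \<noteq> y \<longrightarrow> finite (A x \<inter> A y)) \<and>
     (\<forall>x. A x \<subseteq> T x) \<and>
     (\<forall>x y. \<not> y \<le> x \<longrightarrow> finite (A y - (T y - T x))) \<and>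
     (\<forall>x y z. is_inf x y z \<longrightarrow> almost_eq (T x \<inter> T y) (T z)) \<and>
     (\<forall>x. successor_like x \<longrightarrow> almost_eq (T x - (\<Union>z\<in>pred_set x. T z)) (A x)) \<and>
     (\<forall>x y. incompatible x y \<longrightarrow> finite (T x \<inter> T y))"

end

theory Submission
  imports Defs
begin

(* Two different ordinals a, b can share a point of A only on levels k <= rho(a, b): on a
   higher level both lie in one block of a member of F and their k-norms differ, while sigma
   records a single norm per block.  Cutting A_a below level rho(a, g) therefore leaves a
   "part above g", and by the ultrametric inequality for rho and the finiteness of rho-balls,
   unions of such parts change only finitely when the threshold g moves, when two of them are
   intersected, or when they meet an A_b with b outside the index set.  Given any bijection
   psi from X onto omega_1, choose gamma(x) above psi of the countable down-set of x and put
   T_x = A_psi(x) together with the parts of A_psi(w), w <= x, above gamma(x); every clause of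
   an almost disjoint representation reduces to these finiteness facts. *)

lemma is_type_n_ge_2: "is_type m n r \<Longrightarrow> n (Suc k) \<ge> 2"
  unfolding is_type_def by blast

lemma is_type_r_less: "is_type m n r \<Longrightarrow> r (Suc k) < m k"
  unfolding is_type_def by blast

lemma is_type_m_Suc: "is_type m n r \<Longrightarrow> m (Suc k) = r (Suc k) + (m k - r (Suc k)) * n (Suc k)"
  unfolding is_type_def by blast

lemma is_type_strict_mono:
  assumes "is_type m n r"
  shows "strict_mono m"
  unfolding strict_mono_Suc_iff
proof
  fix k
  have "(m k - r (Suc k)) * 2 \<le> (m k - r (Suc k)) * n (Suc k)"
    using is_type_n_ge_2[OF assms] by simp
  then show "m k < m (Suc k)"
    using is_type_m_Suc[OF assms, of k] is_type_r_less[OF assms, of k] by linarith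
qed

section \<open>Decompositions of a level\<close>

locale decomposition =
  fixes FF :: "'a::linorder set set" and m n r :: "nat \<Rightarrow> nat" and k :: nat
    and F :: "'a set" and Fs :: "nat \<Rightarrow> 'a set" and R :: "'a set"
  assumes type: "is_type m n r" and decomp: "is_decomp FF m n r k F Fs R"
begin

lemma block_level: "i < n (Suc k) \<Longrightarrow> Fs i \<in> level FF m k"
  using decomp unfolding is_decomp_def by blast

lemma card_block: "i < n (Suc k) \<Longrightarrow> card (Fs i) = m k"
  using block_level unfolding level_def by blast

lemma finite_block:
  assumes "i < n (Suc k)"
  shows "finite (Fs i)"
proof (rule card_ge_0_finite)
  show "card (Fs i) > 0" using card_block[OF assms] is_type_r_less[OF type, of k] by simp
qed

lemma union_blocks: "F = (\<Union>i<n (Suc k). Fs i)"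
  using decomp unfolding is_decomp_def by blast

lemma block_subset: "i < n (Suc k) \<Longrightarrow> Fs i \<subseteq> F"
  using union_blocks by blast

lemma block_Int: "i < n (Suc k) \<Longrightarrow> j < n (Suc k) \<Longrightarrow> i \<noteq> j \<Longrightarrow> Fs i \<inter> Fs j = R"
  using decomp unfolding is_decomp_def by blast

lemma root_subset_block:
  assumes i: "i < n (Suc k)"
  shows "R \<subseteq> Fs i"
proof -
  define j where "j = (if i = 0 then 1 else (0::nat))"
  have "j < n (Suc k)" "j \<noteq> i"
    using is_type_n_ge_2[OF type, of k] i unfolding j_def by auto
  then show ?thesis using block_Int[OF i] by blast
qed

lemma root_subset: "R \<subseteq> F"
  using root_subset_block[of 0] block_subset[of 0] is_type_n_ge_2[OF type, of k] by simp

lemma card_root: "card R = r (Suc k)"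
  using decomp unfolding is_decomp_def by blast

lemma finite_root: "finite R"
proof -
  have "0 < n (Suc k)" using is_type_n_ge_2[OF type, of k] by simp
  then show ?thesis using finite_subset[OF root_subset_block finite_block] by blast
qed

lemma root_or_block: "x \<in> F \<Longrightarrow> x \<in> R \<or> (\<exists>j<n (Suc k). x \<in> Fs j - R)"
  using union_blocks by blast

lemma block_of_mem:
  assumes "x \<in> F"
  obtains j where "j < n (Suc k)" "x \<in> Fs j"
  using root_or_block[OF assms] root_subset_block[of 0] is_type_n_ge_2[OF type, of k] by force

lemma card_block_diff_root: "i < n (Suc k) \<Longrightarrow> card (Fs i - R) = m k - r (Suc k)"
  using root_subset_block finite_root card_root card_block by (simp add: card_Diff_subset)

lemma block_diff_root_nonempty:
  assumes "i < n (Suc k)"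
  shows "Fs i - R \<noteq> {}"
proof
  assume empty: "Fs i - R = {}"
  have "m k - r (Suc k) = 0" using card_block_diff_root[OF assms] unfolding empty by simp
  then show False using is_type_r_less[OF type, of k] by simp
qed

lemma blocks_increasing: "j < n (Suc k) \<Longrightarrow> i < j \<Longrightarrow> set_less (Fs i - R) (Fs j - R)"
proof (induction j)
  case 0
  then show ?case by simp
next
  case (Suc j)
  have step: "set_less (Fs j - R) (Fs (Suc j) - R)"
    using decomp Suc.prems unfolding is_decomp_def by blast
  show ?case
  proof (cases "i = j")
    case False
    then have before: "set_less (Fs i - R) (Fs j - R)" using Suc by simp
    obtain z where "z \<in> Fs j - R" using block_diff_root_nonempty[of j] Suc.prems by auto
    then show ?thesis
      using before step unfolding set_less_def by (meson order.strict_trans)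
  qed (use step in simp)
qed

lemma root_less_block:
  assumes i: "i < n (Suc k)" and x: "x \<in> R" and y: "y \<in> Fs i - R"
  shows "x < y"
proof -
  have root_less_first: "set_less R (Fs 0 - R)"
    using decomp unfolding is_decomp_def by blast
  show ?thesis
  proof (cases "i = 0")
    case False
    obtain z where "z \<in> Fs 0 - R" using block_diff_root_nonempty[of 0] i by auto
    then show ?thesis
      using blocks_increasing[OF i] False root_less_first x y unfolding set_less_def
      by (meson order.strict_trans neq0_conv)
  qed (use root_less_first x y in \<open>simp add: set_less_def\<close>)
qed

lemma card_below_root:
  assumes a: "a \<in> R"
  shows "card {x\<in>F. x < a} < r (Suc k)"
proof -
  have "{x\<in>F. x < a} \<subseteq> R - {a}"
    using root_or_block root_less_block a by fastforce
  then have "card {x\<in>F. x < a} \<le> card (R - {a})"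
    using finite_root by (simp add: card_mono)
  also have "\<dots> < card R" using a finite_root by (meson card_Diff1_less)
  finally show ?thesis using card_root by simp
qed

lemma below_block_mem:
  assumes j: "j < n (Suc k)" and a: "a \<in> Fs j - R"
  shows "{x\<in>F. x < a} = R \<union> (\<Union>i<j. Fs i - R) \<union> {x\<in>Fs j - R. x < a}"
proof
  show "{x\<in>F. x < a} \<subseteq> R \<union> (\<Union>i<j. Fs i - R) \<union> {x\<in>Fs j - R. x < a}"
  proof
    fix x assume x: "x \<in> {x\<in>F. x < a}"
    show "x \<in> R \<union> (\<Union>i<j. Fs i - R) \<union> {x\<in>Fs j - R. x < a}"
    proof (cases "x \<in> R")
      case False
      then obtain i where i: "i < n (Suc k)" "x \<in> Fs i - R" using root_or_block x by blast
      have "\<not> j < i"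
      proof
        assume "j < i"
        then have "a < x" using blocks_increasing[OF i(1)] a i(2) unfolding set_less_def by blast
        then show False using x less_asym by blast
      qed
      then consider "i < j" | "i = j" by fastforce
      then show ?thesis
      proof cases
        case 1
        then show ?thesis using i by blast
      next
        case 2
        then show ?thesis using i x by blast
      qed
    qed simp
  qed
  have "R \<subseteq> {x\<in>F. x < a}"
    using root_less_block[OF j _ a] root_subset_block[OF j] block_subset[OF j] by blast
  moreover have "Fs i - R \<subseteq> {x\<in>F. x < a}" if "i < j" for i
    using blocks_increasing[OF j that] a block_subset[of i] that j unfolding set_less_def by auto
  ultimately show "R \<union> (\<Union>i<j. Fs i - R) \<union> {x\<in>Fs j - R. x < a} \<subseteq> {x\<in>F. x < a}"
    using block_subset[OF j] by blast
qed

lemma card_blocks_before: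
  assumes "j \<le> n (Suc k)"
  shows "card (\<Union>i<j. Fs i - R) = j * (m k - r (Suc k))"
proof -
  have "card (\<Union>i<j. Fs i - R) = (\<Sum>i<j. card (Fs i - R))"
  proof (rule card_UN_disjoint)
    show "\<forall>i\<in>{..<j}. finite (Fs i - R)" using finite_block assms by auto
    show "\<forall>i\<in>{..<j}. \<forall>i'\<in>{..<j}. i \<noteq> i' \<longrightarrow> (Fs i - R) \<inter> (Fs i' - R) = {}"
    proof (intro ballI impI)
      fix i i' assume "i \<in> {..<j}" "i' \<in> {..<j}" "i \<noteq> i'"
      then have "Fs i \<inter> Fs i' = R" using block_Int assms by simp
      then show "(Fs i - R) \<inter> (Fs i' - R) = {}" by blast
    qed
  qed simp
  also have "\<dots> = (\<Sum>i<j. m k - r (Suc k))" using card_block_diff_root assms by simp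
  finally show ?thesis by simp
qed

lemma card_below_block:
  assumes j: "j < n (Suc k)" and a: "a \<in> Fs j - R"
  shows "r (Suc k) + j * (m k - r (Suc k)) \<le> card {x\<in>F. x < a}"
    and "card {x\<in>F. x < a} < r (Suc k) + Suc j * (m k - r (Suc k))"
proof -
  define C where "C = {x\<in>Fs j - R. x < a}"
  have finite_C: "finite C" using finite_block[OF j] unfolding C_def by simp
  have "card C < card (Fs j - R)"
    using a finite_block[OF j] unfolding C_def by (intro psubset_card_mono) auto
  then have card_C: "card C < m k - r (Suc k)" using card_block_diff_root[OF j] by simp
  have finite_before: "finite (\<Union>i<j. Fs i - R)" using finite_block j by simp
  have "\<And>i. i < j \<Longrightarrow> Fs i \<inter> Fs j = R" using block_Int j by simp
  then have disjoint_C: "(\<Union>i<j. Fs i - R) \<inter> C = {}" unfolding C_def by blast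
  have "card {x\<in>F. x < a} = card (R \<union> (\<Union>i<j. Fs i - R)) + card C"
    unfolding below_block_mem[OF j a] C_def[symmetric]
    using finite_root finite_before finite_C disjoint_C
    by (intro card_Un_disjoint) (auto simp: C_def)
  also have "\<dots> = card R + card (\<Union>i<j. Fs i - R) + card C"
    using finite_root finite_before by (subst card_Un_disjoint) auto
  also have "\<dots> = r (Suc k) + j * (m k - r (Suc k)) + card C"
    using card_blocks_before[of j] j card_root by simp
  finally show "r (Suc k) + j * (m k - r (Suc k)) \<le> card {x\<in>F. x < a}"
    and "card {x\<in>F. x < a} < r (Suc k) + Suc j * (m k - r (Suc k))"
    using card_C by simp_all
qed

end

lemma snd_NN:
  assumes "p \<in> NN m n k"
  shows "snd p = k"
proof -
  obtain \<sigma> where "p = (\<sigma>, k)" using assms unfolding NN_def by blast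
  then show ?thesis by simp
qed

lemma finite_NN: "finite (NN m n k)"
proof -
  have "NN m n k = (\<lambda>\<sigma>. (\<sigma>, k)) ` ({..<n k} \<rightarrow>\<^sub>E {..<m (k - 1)})"
    unfolding NN_def by auto
  then show ?thesis by (simp add: finite_PiE)
qed

lemma countable_NN_all: "countable (NN_all m n)"
  unfolding NN_all_def using finite_NN by (intro countable_UN) (auto intro: countable_finite)

lemma AF_subset_NN_all: "AF FF m n r a \<subseteq> NN_all m n"
  unfolding AF_def AFk_def NN_all_def by auto

lemma AF_memD: "p \<in> AF FF m n r a \<Longrightarrow> snd p \<ge> 1 \<and> p \<in> AFk FF m n r (snd p) a"
  unfolding AF_def AFk_def using snd_NN by fastforce

lemma finite_AF_levels_le: "finite (AF FF m n r a \<inter> {p. snd p \<le> K})"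
proof (rule finite_subset)
  show "AF FF m n r a \<inter> {p. snd p \<le> K} \<subseteq> (\<Union>k\<le>K. NN m n k)"
    using AF_memD unfolding AFk_def by fastforce
qed (simp add: finite_NN)

section \<open>Levels, the function rho and the norms\<close>

locale scheme =
  fixes FF :: "'a::linorder set set" and m n r :: "nat \<Rightarrow> nat"
  assumes scheme: "construction_scheme FF m n r" and infinite_UNIV: "infinite (UNIV :: 'a set)"
begin

lemma type: "is_type m n r"
  using scheme unfolding construction_scheme_def by blast

lemma level_iff: "F \<in> level FF m k \<longleftrightarrow> F \<in> FF \<and> card F = m k"
  unfolding level_def by simp

lemma finite_level: "F \<in> level FF m k \<Longrightarrow> finite F"
  using scheme unfolding construction_scheme_def level_def by blast

lemma member_in_level: "F \<in> FF \<Longrightarrow> \<exists>k. F \<in> level FF m k"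
  using scheme unfolding construction_scheme_def level_def by blast

lemma cofinal: "finite A \<Longrightarrow> \<exists>F\<in>FF. A \<subseteq> F"
  using scheme unfolding construction_scheme_def by blast

lemma decomposition_of_level:
  assumes "F \<in> level FF m (Suc k)"
  obtains Fs R where "is_decomp FF m n r k F Fs R"
  using assms scheme unfolding construction_scheme_def by blast

lemma decompositionI: "is_decomp FF m n r k F Fs R \<Longrightarrow> decomposition FF m n r k F Fs R"
  using type by unfold_locales

lemma level_closed_below:
  assumes "E \<in> level FF m k" "F \<in> level FF m k" "a \<in> E" "a \<in> F" "x \<in> E" "x < a"
  shows "x \<in> F"
  using assms scheme unfolding construction_scheme_def initial_seg_def by blast

lemma level_member_descends:
  assumes "j \<le> k" "F \<in> level FF m k" "a \<in> F"
  shows "\<exists>E\<in>level FF m j. a \<in> E \<and> E \<subseteq> F"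
  using assms
proof (induction k arbitrary: F)
  case (Suc k)
  show ?case
  proof (cases "j = Suc k")
    case False
    then have "j \<le> k" using Suc.prems by simp
    obtain Fs R where "is_decomp FF m n r k F Fs R"
      using decomposition_of_level[OF Suc.prems(2)] .
    then interpret decomposition FF m n r k F Fs R by (rule decompositionI)
    obtain i where i: "i < n (Suc k)" "a \<in> Fs i" using block_of_mem[OF Suc.prems(3)] .
    obtain E where "E \<in> level FF m j" "a \<in> E" "E \<subseteq> Fs i"
      using Suc.IH[OF \<open>j \<le> k\<close> block_level[OF i(1)] i(2)] by blast
    then show ?thesis using block_subset[OF i(1)] by blast
  qed (use Suc.prems in blast)
qed blast

lemma ex_level_mem: "\<exists>F\<in>level FF m k. a \<in> F"
proof -
  obtain B :: "'a set" where B: "finite B" "card B = m k"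
    using infinite_arbitrarily_large[OF infinite_UNIV] by blast
  obtain F where F: "F \<in> FF" "insert a B \<subseteq> F" using cofinal[of "insert a B"] B by blast
  obtain k' where k': "F \<in> level FF m k'" using member_in_level[OF F(1)] by blast
  have "card B \<le> card F" using F(2) finite_level[OF k'] by (intro card_mono) auto
  then have "m k \<le> m k'" using B k' level_iff by simp
  then have "k \<le> k'" using is_type_strict_mono[OF type] strict_mono_less_eq by blast
  then show ?thesis using level_member_descends[OF _ k', of k a] F(2) by blast
qed

lemma lower_level_closed_below:
  assumes "j \<le> k" "E \<in> level FF m j" "F \<in> level FF m k" "a \<in> E" "a \<in> F" "x \<in> E" "x < a"
  shows "x \<in> F"
proof -
  obtain E' where "E' \<in> level FF m j" "a \<in> E'" "E' \<subseteq> F"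
    using level_member_descends[OF assms(1,3,5)] by blast
  then show ?thesis using level_closed_below[OF assms(2) _ assms(4) _ assms(6,7)] by blast
qed

abbreviation \<rho> where "\<rho> \<equiv> rho FF m"

lemma rho_le_iff: "\<rho> x y \<le> k \<longleftrightarrow> (\<exists>F\<in>level FF m k. x \<in> F \<and> y \<in> F)"
proof
  assume "\<exists>F\<in>level FF m k. x \<in> F \<and> y \<in> F"
  then show "\<rho> x y \<le> k" unfolding rho_def by (rule Least_le)
next
  assume le: "\<rho> x y \<le> k"
  obtain G where G: "G \<in> FF" "{x, y} \<subseteq> G" using cofinal[of "{x, y}"] by auto
  have "\<exists>k. \<exists>F\<in>level FF m k. x \<in> F \<and> y \<in> F" using member_in_level[OF G(1)] G(2) by blast
  from LeastI_ex[OF this] obtain F0 where F0: "F0 \<in> level FF m (\<rho> x y)" "x \<in> F0" "y \<in> F0"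
    unfolding rho_def by blast
  obtain F where F: "F \<in> level FF m k" "max x y \<in> F" using ex_level_mem by blast
  have "min x y \<in> F"
  proof (cases "x = y")
    case False
    then have "min x y < max x y" by (auto simp: min_def max_def)
    moreover have "min x y \<in> F0" "max x y \<in> F0" using F0 by (simp_all add: min_def max_def)
    ultimately show ?thesis using lower_level_closed_below[OF le F0(1) F(1) _ F(2)] by blast
  qed (use F in simp)
  then show "\<exists>F\<in>level FF m k. x \<in> F \<and> y \<in> F"
    using F by (cases "x \<le> y") (auto simp: min_def max_def)
qed

lemma rho_sym: "\<rho> x y = \<rho> y x"
  unfolding rho_def by (metis (no_types, lifting))

lemma rho_self: "\<rho> x x = 0"
  using rho_le_iff[of x x 0] ex_level_mem by auto

lemma rho_ultrametric_below:
  assumes "x \<le> c"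
  shows "\<rho> x y \<le> max (\<rho> x c) (\<rho> y c)"
proof -
  define k where "k = max (\<rho> x c) (\<rho> y c)"
  obtain E where E: "E \<in> level FF m k" "x \<in> E" "c \<in> E"
    using rho_le_iff[of x c k] unfolding k_def by auto
  obtain F where F: "F \<in> level FF m k" "y \<in> F" "c \<in> F"
    using rho_le_iff[of y c k] unfolding k_def by auto
  have "x \<in> F"
    using assms level_closed_below[OF E(1) F(1) E(3) F(3) E(2)] F(3) by (cases "x = c") auto
  then show ?thesis using rho_le_iff[of x y k] F unfolding k_def by blast
qed

lemma rho_ultrametric:
  assumes "min x y \<le> c"
  shows "\<rho> x y \<le> max (\<rho> x c) (\<rho> y c)"
proof (cases "x \<le> c")
  case False
  then have "y \<le> c" using assms by (metis min_le_iff_disj)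
  then show ?thesis using rho_ultrametric_below[of y c x] rho_sym[of x y] by (simp add: max.commute)
qed (rule rho_ultrametric_below)

lemma rho_ball_subset_level:
  assumes F: "F \<in> level FF m k" "c \<in> F"
  shows "{x. x \<le> c \<and> \<rho> x c \<le> k} \<subseteq> F"
proof
  fix x assume x: "x \<in> {x. x \<le> c \<and> \<rho> x c \<le> k}"
  obtain G where G: "G \<in> level FF m k" "x \<in> G" "c \<in> G" using x rho_le_iff by blast
  show "x \<in> F"
    using x F(2) level_closed_below[OF G(1) F(1) G(3) F(2) G(2)] by (cases "x = c") auto
qed

lemma finite_rho_ball: "finite {x. x \<le> c \<and> \<rho> x c \<le> k}"
proof -
  obtain F where F: "F \<in> level FF m k" "c \<in> F" using ex_level_mem by blast
  show ?thesis using rho_ball_subset_level[OF F] finite_level[OF F(1)] finite_subset by blast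
qed

lemma normk_eq_card:
  assumes F: "F \<in> level FF m k" "a \<in> F"
  shows "normk FF m k a = card {x\<in>F. x < a}"
proof -
  have "{\<xi>. \<xi> < a \<and> \<rho> \<xi> a \<le> k} = {x\<in>F. x < a}"
    using rho_ball_subset_level[OF F] rho_le_iff F by fastforce
  then show ?thesis unfolding normk_def by simp
qed

lemma normk_less: "normk FF m k a < m k"
proof -
  obtain F where F: "F \<in> level FF m k" "a \<in> F" using ex_level_mem by blast
  have "card {x\<in>F. x < a} < card F"
    using F(2) finite_level[OF F(1)] by (intro psubset_card_mono) auto
  then show ?thesis using normk_eq_card[OF F] F(1) level_iff by simp
qed

lemma normk_strict_mono_on_level:
  assumes F: "F \<in> level FF m k" and "a \<in> F" "b \<in> F" "a < b"
  shows "normk FF m k a < normk FF m k b"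
proof -
  have "card {x\<in>F. x < a} < card {x\<in>F. x < b}"
    using assms finite_level[OF F] by (intro psubset_card_mono) auto
  then show ?thesis using normk_eq_card assms by simp
qed

section \<open>The function Xi and the family A\<close>

definition Xi_cond :: "'a \<Rightarrow> nat \<Rightarrow> int \<Rightarrow> bool" where
  "Xi_cond a k i \<longleftrightarrow> (\<exists>F Fs R. F \<in> level FF m k \<and> a \<in> F \<and>
       is_decomp FF m n r (k - 1) F Fs R \<and>
       ((a \<in> R \<and> i = -1) \<or> (\<exists>j<n k. a \<in> Fs j - R \<and> i = int j)))"

lemma Xi_cond_determined:
  assumes "Xi_cond a (Suc k) i"
  shows "i = (if normk FF m (Suc k) a < r (Suc k) then -1
              else int ((normk FF m (Suc k) a - r (Suc k)) div (m k - r (Suc k))))"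
proof -
  obtain F Fs R where F: "F \<in> level FF m (Suc k)" "a \<in> F" and dec: "is_decomp FF m n r k F Fs R"
    and pos: "(a \<in> R \<and> i = -1) \<or> (\<exists>j<n (Suc k). a \<in> Fs j - R \<and> i = int j)"
    using assms unfolding Xi_cond_def by auto
  interpret decomposition FF m n r k F Fs R using dec by (rule decompositionI)
  have normk: "normk FF m (Suc k) a = card {x\<in>F. x < a}" using normk_eq_card[OF F] .
  from pos show ?thesis
  proof
    assume "\<exists>j<n (Suc k). a \<in> Fs j - R \<and> i = int j"
    then obtain j where j: "j < n (Suc k)" "a \<in> Fs j - R" "i = int j" by blast
    note bounds = card_below_block[OF j(1,2)]
    have "(card {x\<in>F. x < a} - r (Suc k)) div (m k - r (Suc k)) = j"
      by (rule div_nat_eqI) (use bounds in \<open>auto simp: mult.commute\<close>)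
    then show ?thesis using bounds normk j(3) by auto
  qed (use card_below_root normk in simp)
qed

lemma Xi_cond_root:
  assumes "F \<in> level FF m (Suc k)" "is_decomp FF m n r k F Fs R" "a \<in> R"
  shows "Xi_cond a (Suc k) (-1)"
proof -
  have "a \<in> F" using decomposition.root_subset[OF decompositionI[OF assms(2)]] assms(3) by blast
  then show ?thesis unfolding Xi_cond_def using assms by auto
qed

lemma Xi_cond_block:
  assumes "F \<in> level FF m (Suc k)" "is_decomp FF m n r k F Fs R" "j < n (Suc k)" "a \<in> Fs j - R"
  shows "Xi_cond a (Suc k) (int j)"
proof -
  have "a \<in> F" using decomposition.block_subset[OF decompositionI[OF assms(2)] assms(3)] assms(4) by blast
  then show ?thesis unfolding Xi_cond_def using assms by auto
qed

lemma Xi_cond_Xi: "Xi_cond a (Suc k) (Xi FF m n r a (Suc k))"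
proof -
  obtain F where F: "F \<in> level FF m (Suc k)" "a \<in> F" using ex_level_mem by blast
  obtain Fs R where dec: "is_decomp FF m n r k F Fs R"
    using decomposition_of_level[OF F(1)] .
  have "\<exists>i. Xi_cond a (Suc k) i"
    using decomposition.root_or_block[OF decompositionI[OF dec] F(2)]
      Xi_cond_root[OF F(1) dec] Xi_cond_block[OF F(1) dec] by blast
  then show ?thesis unfolding Xi_def Xi_cond_def[symmetric] by (rule someI_ex)
qed

lemma Xi_eqI: "Xi_cond a (Suc k) i \<Longrightarrow> Xi FF m n r a (Suc k) = i"
  using Xi_cond_determined Xi_cond_Xi by metis

lemmas Xi_root = Xi_eqI[OF Xi_cond_root]
lemmas Xi_block = Xi_eqI[OF Xi_cond_block]

abbreviation AA where "AA \<equiv> AF FF m n r"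

lemma AFk_disjoint_above_rho:
  assumes ab: "a < b" and le: "\<rho> a b \<le> k"
  shows "AFk FF m n r (Suc k) a \<inter> AFk FF m n r (Suc k) b = {}"
proof (rule ccontr)
  assume "AFk FF m n r (Suc k) a \<inter> AFk FF m n r (Suc k) b \<noteq> {}"
  then obtain p where pa: "p \<in> AFk FF m n r (Suc k) a" and pb: "p \<in> AFk FF m n r (Suc k) b" by blast
  obtain F where F: "F \<in> level FF m (Suc k)" "a \<in> F" "b \<in> F" using rho_le_iff[of a b "Suc k"] le by auto
  obtain E where E: "E \<in> level FF m k" "a \<in> E" "b \<in> E" using rho_le_iff[of a b k] le by auto
  obtain Fs R where dec: "is_decomp FF m n r k F Fs R"
    using decomposition_of_level[OF F(1)] .
  interpret decomposition FF m n r k F Fs R using dec by (rule decompositionI)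
  obtain i where i: "i < n (Suc k)" "b \<in> Fs i" using block_of_mem[OF F(3)] .
  have a_i: "a \<in> Fs i" using level_closed_below[OF E(1) block_level[OF i(1)] E(3) i(2) E(2) ab] .
  have "a \<notin> R" "b \<notin> R" using pa pb Xi_root[OF F(1) dec] unfolding AFk_def by auto
  then have "Xi FF m n r a (Suc k) = int i" "Xi FF m n r b (Suc k) = int i"
    using Xi_block[OF F(1) dec i(1)] a_i i(2) by auto
  then have "normk FF m k a = normk FF m k b" using pa pb unfolding AFk_def by auto
  moreover have "normk FF m k a < normk FF m k b"
    using normk_strict_mono_on_level[OF block_level[OF i(1)] a_i i(2) ab] .
  ultimately show False by simp
qed

lemma AF_Int_level_le_rho:
  assumes "a \<noteq> b" "p \<in> AA a" "p \<in> AA b"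
  shows "snd p \<le> \<rho> a b"
proof (rule ccontr)
  assume "\<not> snd p \<le> \<rho> a b"
  then obtain k where k: "snd p = Suc k" "\<rho> a b \<le> k" by (cases "snd p") auto
  have pa: "p \<in> AFk FF m n r (Suc k) a" and pb: "p \<in> AFk FF m n r (Suc k) b"
    using AF_memD[OF assms(2)] AF_memD[OF assms(3)] k(1) by simp_all
  consider "a < b" | "b < a" using assms(1) neq_iff by blast
  then show False
  proof cases
    case 1
    then show False using AFk_disjoint_above_rho[OF 1 k(2)] pa pb by blast
  next
    case 2
    then show False using AFk_disjoint_above_rho[OF 2] k(2) rho_sym[of a b] pa pb by auto
  qed
qed

lemma AF_almost_disjoint:
  assumes "a \<noteq> b"
  shows "finite (AA a \<inter> AA b)"
proof (rule finite_subset)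
  show "AA a \<inter> AA b \<subseteq> AA a \<inter> {p. snd p \<le> \<rho> a b}" using AF_Int_level_le_rho[OF assms] by blast
qed (rule finite_AF_levels_le)

lemma infinite_AF:
  assumes good: "good_type m n r"
  shows "infinite (AA a)"
proof
  assume fin: "finite (AA a)"
  \<comment> \<open>On a level with empty root every point lies in a block, so A a meets that level.\<close>
  have "{k. k \<ge> 1 \<and> r k = 0} \<subseteq> snd ` AA a"
  proof
    fix k assume "k \<in> {k. k \<ge> 1 \<and> r k = 0}"
    then obtain k0 where k0: "k = Suc k0" "r (Suc k0) = 0" by (cases k) auto
    obtain F where F: "F \<in> level FF m (Suc k0)" "a \<in> F" using ex_level_mem by blast
    obtain Fs R where dec: "is_decomp FF m n r k0 F Fs R"
      using decomposition_of_level[OF F(1)] .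
    interpret decomposition FF m n r k0 F Fs R using dec by (rule decompositionI)
    have "R = {}" using card_root finite_root k0(2) by simp
    then obtain j where j: "j < n (Suc k0)" "a \<in> Fs j - R" using root_or_block[OF F(2)] by blast
    define \<sigma> where "\<sigma> = (\<lambda>x. if x < n (Suc k0) then (if x = j then normk FF m k0 a else 0) else undefined)"
    have "\<sigma> \<in> {..<n (Suc k0)} \<rightarrow>\<^sub>E {..<m k0}"
      using normk_less[of k0 a] is_type_r_less[OF type, of k0]
      unfolding \<sigma>_def by (auto simp: PiE_def extensional_def)
    then have "(\<sigma>, Suc k0) \<in> AFk FF m n r (Suc k0) a"
      unfolding AFk_def NN_def using Xi_block[OF F(1) dec j] j(1) by (simp add: \<sigma>_def)
    then have "(\<sigma>, Suc k0) \<in> AA a" unfolding AF_def by auto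
    then show "k \<in> snd ` AA a" using k0 by force
  qed
  moreover have "infinite {k. k \<ge> 1 \<and> r k = 0}" using good unfolding good_type_def by blast
  ultimately show False using fin finite_subset by blast
qed

section \<open>Unions of the parts of A above a threshold\<close>

definition AF_above :: "'a \<Rightarrow> 'a \<Rightarrow> ((nat \<Rightarrow> nat) \<times> nat) set" where
  "AF_above a g = {p \<in> AA a. \<rho> a g < snd p}"

definition union_above :: "'a set \<Rightarrow> 'a \<Rightarrow> ((nat \<Rightarrow> nat) \<times> nat) set" where
  "union_above U g = (\<Union>a\<in>U. AF_above a g)"

lemma finite_AF_diff_above: "finite (AA a - AF_above a g)"
proof (rule finite_subset)
  show "AA a - AF_above a g \<subseteq> AA a \<inter> {p. snd p \<le> \<rho> a g}" unfolding AF_above_def by auto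
qed (rule finite_AF_levels_le)

lemma union_above_subset_NN_all: "union_above U g \<subseteq> NN_all m n"
  unfolding union_above_def AF_above_def using AF_subset_NN_all by blast

text \<open>Changing the threshold point from g to g' only matters for points a in the finite
  \<rho>-ball of radius \<rho> g g' around g, and there only on levels up to \<rho> g g'.\<close>
lemma finite_union_above_diff:
  assumes U: "\<forall>a\<in>U. a \<le> g" and UW: "U \<subseteq> W"
  shows "finite (union_above U g - union_above W g')"
proof (rule finite_subset)
  define c where "c = \<rho> g g'"
  define I where "I = {a. a \<le> g \<and> \<rho> a g \<le> c}"
  show "union_above U g - union_above W g' \<subseteq> (\<Union>a\<in>I. AA a \<inter> {p. snd p \<le> c})"
  proof
    fix p assume "p \<in> union_above U g - union_above W g'"
    then obtain a where a: "a \<in> U" "p \<in> AF_above a g" "p \<notin> AF_above a g'"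
      using UW unfolding union_above_def by blast
    have p: "p \<in> AA a" "\<rho> a g < snd p" "snd p \<le> \<rho> a g'"
      using a(2,3) unfolding AF_above_def by auto
    have "min a g' \<le> g" using U a(1) by (simp add: min.coboundedI1)
    then have "\<rho> a g' \<le> max (\<rho> a g) (\<rho> g' g)" by (rule rho_ultrametric)
    then have "\<rho> a g' \<le> c" using p rho_sym[of g' g] unfolding c_def by linarith
    then have "a \<in> I" "snd p \<le> c" using p U a(1) unfolding I_def by auto
    then show "p \<in> (\<Union>a\<in>I. AA a \<inter> {p. snd p \<le> c})" using p by blast
  qed
  show "finite (\<Union>a\<in>I. AA a \<inter> {p. snd p \<le> c})"
    using finite_rho_ball finite_AF_levels_le unfolding I_def by blast
qed

text \<open>A point of A a \<inter> A b with a \<noteq> b lies on a level at most \<rho> a b; above the thresholds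
  this forces (a, b) into a finite product of \<rho>-balls.\<close>
lemma finite_union_above_Int_diff:
  assumes U: "\<forall>a\<in>U. a \<le> g" and V: "\<forall>b\<in>V. b \<le> g'"
  shows "finite (union_above U g \<inter> union_above V g' - union_above (U \<inter> V) g)"
proof (rule finite_subset)
  define c where "c = \<rho> g g'"
  define J where "J = {(a, b). a \<le> g \<and> \<rho> a g \<le> c \<and> b \<le> g' \<and> \<rho> b g' \<le> c \<and> a \<noteq> b}"
  show "union_above U g \<inter> union_above V g' - union_above (U \<inter> V) g
      \<subseteq> (\<Union>(a, b)\<in>J. AA a \<inter> AA b)"
  proof
    fix p assume p: "p \<in> union_above U g \<inter> union_above V g' - union_above (U \<inter> V) g"
    then obtain a b where ab: "a \<in> U" "b \<in> V" "p \<in> AF_above a g" "p \<in> AF_above b g'"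
      unfolding union_above_def by blast
    have "a \<noteq> b" using ab p unfolding union_above_def by blast
    have pa: "p \<in> AA a" "\<rho> a g < snd p" and pb: "p \<in> AA b" "\<rho> b g' < snd p"
      using ab(3,4) unfolding AF_above_def by auto
    have level: "snd p \<le> \<rho> a b" using AF_Int_level_le_rho[OF \<open>a \<noteq> b\<close> pa(1) pb(1)] .
    have "min a b \<le> g" using U ab(1) by (simp add: min.coboundedI1)
    then have "\<rho> a b \<le> max (\<rho> a g) (\<rho> b g)" by (rule rho_ultrametric)
    then have ab_g: "\<rho> a b \<le> \<rho> b g" using pa level by linarith
    have "min b g \<le> g'" using V ab(2) by (simp add: min.coboundedI1)
    then have "\<rho> b g \<le> max (\<rho> b g') (\<rho> g g')" by (rule rho_ultrametric)
    then have "\<rho> b g \<le> c" using pb level ab_g unfolding c_def by linarith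
    then have "(a, b) \<in> J" unfolding J_def using U V ab(1,2) \<open>a \<noteq> b\<close> pa pb level ab_g by auto
    then show "p \<in> (\<Union>(a, b)\<in>J. AA a \<inter> AA b)" using pa pb by blast
  qed
  have "J \<subseteq> {a. a \<le> g \<and> \<rho> a g \<le> c} \<times> {b. b \<le> g' \<and> \<rho> b g' \<le> c}" unfolding J_def by auto
  moreover have "finite ({a. a \<le> g \<and> \<rho> a g \<le> c} \<times> {b. b \<le> g' \<and> \<rho> b g' \<le> c})"
    using finite_rho_ball by blast
  ultimately have "finite J" by (rule finite_subset)
  then show "finite (\<Union>(a, b)\<in>J. AA a \<inter> AA b)"
    using AF_almost_disjoint unfolding J_def by auto
qed

lemma finite_AF_Int_union_above:
  assumes U: "\<forall>a\<in>U. a \<le> g" and b: "b \<notin> U"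
  shows "finite (AA b \<inter> union_above U g)"
proof -
  have "union_above {b} b = AA b"
    unfolding union_above_def AF_above_def using rho_self AF_memD by fastforce
  moreover have "union_above (U \<inter> {b}) g = {}" using b unfolding union_above_def by auto
  moreover have "finite (union_above U g \<inter> union_above {b} b - union_above (U \<inter> {b}) g)"
    by (rule finite_union_above_Int_diff) (use U in auto)
  ultimately show ?thesis by (simp add: Int_commute)
qed

end

section \<open>The representation\<close>

lemma countable_set_bounded:
  fixes S :: "'a::linorder set"
  assumes "uncountable (UNIV :: 'a set)" "\<forall>\<alpha>::'a. countable {\<beta>. \<beta> < \<alpha>}" "countable S"
  shows "\<exists>g. \<forall>s\<in>S. s \<le> g"
proof (rule ccontr)
  assume "\<nexists>g. \<forall>s\<in>S. s \<le> g"
  then have "(UNIV :: 'a set) \<subseteq> (\<Union>s\<in>S. {\<beta>. \<beta> < s})" by (auto simp: not_le)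
  moreover have "countable (\<Union>s\<in>S. {\<beta>. \<beta> < s})" using assms(2,3) by (intro countable_UN) auto
  ultimately show False using assms(1) countable_subset by blast
qed

locale ad_construction = scheme FF m n r for FF :: "'a::linorder set set" and m n r +
  fixes \<psi> :: "'b::order \<Rightarrow> 'a" and \<gamma> :: "'b \<Rightarrow> 'a"
  assumes inj_\<psi>: "inj \<psi>" and \<gamma>_bound: "w \<le> x \<Longrightarrow> \<psi> w \<le> \<gamma> x"
begin

definition down :: "'b \<Rightarrow> 'a set" where
  "down x = \<psi> ` {w. w \<le> x}"

definition core :: "'b \<Rightarrow> ((nat \<Rightarrow> nat) \<times> nat) set" where
  "core x = union_above (down x) (\<gamma> x)"

definition T :: "'b \<Rightarrow> ((nat \<Rightarrow> nat) \<times> nat) set" where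
  "T x = AA (\<psi> x) \<union> core x"

lemma down_bounded: "\<forall>a\<in>down x. a \<le> \<gamma> x"
  unfolding down_def using \<gamma>_bound by auto

lemma down_Int: "down x \<inter> down y = \<psi> ` {w. w \<le> x \<and> w \<le> y}"
  unfolding down_def using inj_\<psi> by (auto simp: inj_eq)

lemma \<psi>_notin_down: "\<not> y \<le> x \<Longrightarrow> \<psi> y \<notin> down x"
  unfolding down_def using inj_\<psi> by (auto simp: inj_eq)

lemma AF_subset_T: "AA (\<psi> x) \<subseteq> T x"
  unfolding T_def by blast

lemma core_subset_T: "core x \<subseteq> T x"
  unfolding T_def by blast

lemma finite_AF_diff_core: "finite (AA (\<psi> x) - core x)"
proof (rule finite_subset)
  show "AA (\<psi> x) - core x \<subseteq> AA (\<psi> x) - AF_above (\<psi> x) (\<gamma> x)"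
    unfolding core_def union_above_def down_def by auto
qed (rule finite_AF_diff_above)

lemma finite_AF_Int_T:
  assumes "\<not> y \<le> x"
  shows "finite (AA (\<psi> y) \<inter> T x)"
proof -
  have "\<psi> y \<noteq> \<psi> x" using assms inj_\<psi> by (auto simp: inj_eq)
  then have "finite (AA (\<psi> y) \<inter> AA (\<psi> x))" by (rule AF_almost_disjoint)
  moreover have "finite (AA (\<psi> y) \<inter> core x)" unfolding core_def
    by (rule finite_AF_Int_union_above[OF down_bounded \<psi>_notin_down[OF assms]])
  ultimately show ?thesis unfolding T_def by (simp add: Int_Un_distrib)
qed

lemma finite_T_Int_diff: "finite (T x \<inter> T y - union_above (down x \<inter> down y) (\<gamma> x))"
proof (rule finite_subset)
  show "T x \<inter> T y - union_above (down x \<inter> down y) (\<gamma> x) \<subseteq> (AA (\<psi> x) - core x) \<union> (AA (\<psi> y) - core y)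
      \<union> (core x \<inter> core y - union_above (down x \<inter> down y) (\<gamma> x))"
    unfolding T_def by blast
  have "finite (core x \<inter> core y - union_above (down x \<inter> down y) (\<gamma> x))"
    unfolding core_def by (rule finite_union_above_Int_diff[OF down_bounded down_bounded])
  then show "finite ((AA (\<psi> x) - core x) \<union> (AA (\<psi> y) - core y)
      \<union> (core x \<inter> core y - union_above (down x \<inter> down y) (\<gamma> x)))"
    using finite_AF_diff_core by blast
qed

lemma finite_T_diff_core:
  assumes "z \<le> x"
  shows "finite (T z - core x)"
proof (rule finite_subset)
  show "T z - core x \<subseteq> (AA (\<psi> z) - core z) \<union> (core z - core x)" unfolding T_def by blast
  have "down z \<subseteq> down x" unfolding down_def using assms order_trans by auto
  then have "finite (core z - core x)"
    unfolding core_def by (rule finite_union_above_diff[OF down_bounded])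
  then show "finite ((AA (\<psi> z) - core z) \<union> (core z - core x))" using finite_AF_diff_core by blast
qed

lemma T_Int_almost_eq_inf:
  assumes "is_inf x y z"
  shows "almost_eq (T x \<inter> T y) (T z)"
proof -
  have zx: "z \<le> x" and zy: "z \<le> y" and greatest: "\<And>w. w \<le> x \<Longrightarrow> w \<le> y \<Longrightarrow> w \<le> z"
    using assms unfolding is_inf_def by auto
  have "down x \<inter> down y \<subseteq> down z" unfolding down_Int unfolding down_def using greatest by auto
  then have "finite (union_above (down x \<inter> down y) (\<gamma> x) - core z)"
    unfolding core_def by (rule finite_union_above_diff[rotated]) (use down_bounded in blast)
  moreover have "T x \<inter> T y - T z \<subseteq> (T x \<inter> T y - union_above (down x \<inter> down y) (\<gamma> x))
      \<union> (union_above (down x \<inter> down y) (\<gamma> x) - core z)"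
    using core_subset_T[of z] by blast
  ultimately have "finite (T x \<inter> T y - T z)"
    using finite_T_Int_diff[of x y] by (meson finite_UnI finite_subset)
  moreover have "T z - T x \<inter> T y \<subseteq> (T z - core x) \<union> (T z - core y)"
    using core_subset_T[of x] core_subset_T[of y] by blast
  then have "finite (T z - T x \<inter> T y)"
    using finite_T_diff_core[OF zx] finite_T_diff_core[OF zy] by (meson finite_UnI finite_subset)
  ultimately show ?thesis unfolding almost_eq_def by blast
qed

lemma T_diff_preds_almost_eq:
  assumes "successor_like x"
  shows "almost_eq (T x - (\<Union>z\<in>pred_set x. T z)) (AA (\<psi> x))"
proof -
  define P where "P = pred_set x"
  have finite_P: "finite P" using assms unfolding successor_like_def P_def by blast
  have P_less: "z \<in> P \<Longrightarrow> z < x" for z unfolding P_def pred_set_def by blast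
  have P_cover: "w < x \<Longrightarrow> \<exists>z\<in>P. w \<le> z" for w using assms unfolding successor_like_def P_def by blast
  have "T x - (\<Union>z\<in>P. T z) - AA (\<psi> x) \<subseteq> (\<Union>z\<in>P. union_above (down z) (\<gamma> x) - core z)"
  proof
    fix p assume p: "p \<in> T x - (\<Union>z\<in>P. T z) - AA (\<psi> x)"
    then obtain w where w: "w \<le> x" "p \<in> AF_above (\<psi> w) (\<gamma> x)"
      unfolding T_def core_def union_above_def down_def by blast
    have "w \<noteq> x" using w(2) p unfolding AF_above_def by blast
    then have "w < x" using w(1) by simp
    then obtain z where z: "z \<in> P" "w \<le> z" using P_cover by blast
    have "p \<in> union_above (down z) (\<gamma> x)" unfolding union_above_def down_def using z w by blast
    moreover have "p \<notin> core z" using p z core_subset_T[of z] by blast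
    ultimately show "p \<in> (\<Union>z\<in>P. union_above (down z) (\<gamma> x) - core z)" using z by blast
  qed
  moreover have "finite (union_above (down z) (\<gamma> x) - core z)" if "z \<in> P" for z
  proof -
    have "\<forall>a\<in>down z. a \<le> \<gamma> x"
      unfolding down_def using P_less[OF that] \<gamma>_bound order_trans less_imp_le by blast
    then show ?thesis unfolding core_def by (rule finite_union_above_diff) simp
  qed
  ultimately have "finite (T x - (\<Union>z\<in>P. T z) - AA (\<psi> x))"
    using finite_P by (simp add: finite_subset)
  moreover have "AA (\<psi> x) - (T x - (\<Union>z\<in>P. T z)) \<subseteq> (\<Union>z\<in>P. AA (\<psi> x) \<inter> T z)"
    using AF_subset_T by blast
  moreover have "finite (\<Union>z\<in>P. AA (\<psi> x) \<inter> T z)"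
  proof (rule finite_UN_I[OF finite_P])
    show "finite (AA (\<psi> x) \<inter> T z)" if "z \<in> P" for z
      using finite_AF_Int_T P_less[OF that] by (simp add: less_le_not_le)
  qed
  ultimately show ?thesis
    unfolding almost_eq_def P_def[symmetric] using finite_subset by blast
qed

lemma finite_T_Int_incompatible:
  assumes "incompatible x y"
  shows "finite (T x \<inter> T y)"
proof -
  have "down x \<inter> down y = {}" unfolding down_Int using assms unfolding incompatible_def by auto
  then show ?thesis using finite_T_Int_diff[of x y] unfolding union_above_def by simp
qed

lemma ad_representation_T:
  assumes good: "good_type m n r"
  shows "ad_representation (NN_all m n) T (\<lambda>x. AA (\<psi> x))"
  unfolding ad_representation_def
proof (intro conjI allI impI)
  have almost_disjoint: "x \<noteq> y \<Longrightarrow> finite (AA (\<psi> x) \<inter> AA (\<psi> y))" for x y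
    using AF_almost_disjoint inj_\<psi> by (simp add: inj_eq)
  show "countable (NN_all m n)" by (rule countable_NN_all)
  fix x y z
  show "T x \<subseteq> NN_all m n"
    unfolding T_def core_def using AF_subset_NN_all union_above_subset_NN_all by blast
  show "infinite (T x)" using AF_subset_T infinite_AF[OF good] finite_subset by blast
  show "AA (\<psi> x) \<subseteq> NN_all m n" by (rule AF_subset_NN_all)
  show "infinite (AA (\<psi> x))" by (rule infinite_AF[OF good])
  show "inj (\<lambda>x. AA (\<psi> x))"
  proof (rule injI, rule ccontr)
    fix x y assume "AA (\<psi> x) = AA (\<psi> y)" "x \<noteq> y"
    then show False using almost_disjoint infinite_AF[OF good] by fastforce
  qed
  show "x \<noteq> y \<Longrightarrow> finite (AA (\<psi> x) \<inter> AA (\<psi> y))" by (rule almost_disjoint)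
  show "AA (\<psi> x) \<subseteq> T x" by (rule AF_subset_T)
  show "finite (AA (\<psi> y) - (T y - T x))" if "\<not> y \<le> x"
  proof (rule finite_subset)
    show "AA (\<psi> y) - (T y - T x) \<subseteq> AA (\<psi> y) \<inter> T x" using AF_subset_T[of y] by blast
  qed (rule finite_AF_Int_T[OF that])
  show "is_inf x y z \<Longrightarrow> almost_eq (T x \<inter> T y) (T z)" by (rule T_Int_almost_eq_inf)
  show "successor_like x \<Longrightarrow> almost_eq (T x - (\<Union>z\<in>pred_set x. T z)) (AA (\<psi> x))"
    by (rule T_diff_preds_almost_eq)
  show "incompatible x y \<Longrightarrow> finite (T x \<inter> T y)" by (rule finite_T_Int_incompatible)
qed

end

theorem mainTheorem12:
  fixes FF :: "'a::wellorder set set" and m n r :: "nat \<Rightarrow> nat"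
  assumes omega1: "uncountable (UNIV :: 'a set)" "\<forall>\<alpha>::'a. countable {\<beta>. \<beta> < \<alpha>}"
    and scheme: "construction_scheme FF m n r" and good: "good_type m n r"
    and wf: "wfP ((<) :: 'b::order \<Rightarrow> 'b \<Rightarrow> bool)"
    and size: "\<exists>f :: 'b \<Rightarrow> 'a. bij f"
    and segs: "\<forall>x :: 'b. countable {y. y < x}"
  shows "\<exists>(\<psi> :: 'b \<Rightarrow> 'a) T. bij \<psi> \<and> ad_representation (NN_all m n) T (\<lambda>x. AF FF m n r (\<psi> x))"
proof -
  have "infinite (UNIV :: 'a set)" using omega1(1) countable_finite by blast
  then interpret scheme FF m n r using scheme by unfold_locales
  obtain \<psi> :: "'b \<Rightarrow> 'a" where \<psi>: "bij \<psi>" using size by blast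
  have "\<exists>g. \<forall>s\<in>\<psi> ` {w. w \<le> x}. s \<le> g" for x
  proof (rule countable_set_bounded[OF omega1])
    have "{w. w \<le> x} = insert x {y. y < x}" by auto
    then show "countable (\<psi> ` {w. w \<le> x})" using segs by simp
  qed
  then obtain \<gamma> where "\<And>x w. w \<le> x \<Longrightarrow> \<psi> w \<le> \<gamma> x" by (metis imageI mem_Collect_eq)
  then interpret ad_construction FF m n r \<psi> \<gamma>
    using \<psi> bij_is_inj by unfold_locales blast+
  show ?thesis using ad_representation_T[OF good] \<psi> by blast
qed

end
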